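(* Fix $c_p>0$, a finite set $\mathcal{T}$ of window lengths, $n\ge1$ and a fixed sequence of inter-arrival times $x_1,\dots,x_n>0$. Consider a randomized custom keep-alive policy which, given report $\hat\theta\ge0$, produces random window lengths $\tau_{\hat\theta,\mathcal{H}_{i-1}}$ used for arrival $i$, and charge externality payments $p_i=wm(\tau_{\hat\theta,\mathcal{H}_{i-1}},x_i)$. Define $$\kappa(\hat\theta)=\Big(\mathbb{E}\sum_{i=1}^n wm(\tau_{\hat\theta,\mathcal{H}_{i-1}},x_i),\ \mathbb{E}\sum_{i=1}^n cs(\tau_{\hat\theta,\mathcal{H}_{i-1}},x_i)\Big),\qquad \kappa(\tau)=\Big(\sum_{i=1}^n wm(\tau,x_i),\ \sum_{i=1}^n cs(\tau,x_i)\Big)\ (\tau\in\mathcal{T}),$$ and $$D(\theta)=\max\Big(0,\ \sup_{\hat\theta\ge0}\ \min_{\tau\in\mathcal{T}}\big(\kappa(\tau)-\kappa(\hat\theta)\big)\cdot(1,\theta)\Big).$$ Suppose $R_n$ bounds the policy's expected regret under truthful reporting: for every $\theta\ge0$, $\kappa(\theta)\cdot(1,\theta)-\min_{\tau\in\mathcal{T}}\kappa(\tau)\cdot(1,\theta)\le R_n$. Then for every true type $\theta\ge0$ and every report $\hat\theta\ge0$, the customer's expected total cost satisfies $$\mathbb{E}\sum_{i=1}^n \mathrm{cost}_i(\text{report }\theta)\le\mathbb{E}\sum_{i=1}^n\mathrm{cost}_i(\text{report }\hat\theta)+R_n+D(\theta).$$ Consequently, externality payments are $\varepsilon$-IC with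 $\varepsilon=\frac1n\big(R_n+\sup_{\theta}D(\theta)\big)$.
   Context: For a window length $\tau\in[0,\infty]$ and inter-arrival time $x>0$: $cs(\tau,x)=1$ if $x>\tau$ and $0$ otherwise; $wm(\tau,x)=c_px$ if $x\le\tau$ and $c_p\tau$ if $x>\tau$. $\mathcal{H}_{i}=(x_1,\dots,x_i)$ is the history of inter-arrival times. A customer with true cold-start cost $\theta\ge0$ reporting $\hat\theta$ incurs on arrival $i$ the cost $\mathrm{cost}_i=p_i+\theta\cdot cs(\tau_{\hat\theta,\mathcal{H}_{i-1}},x_i)$. Expectations are over the randomness of the policy. A payment rule is $\varepsilon$-IC if for all $\theta,\hat\theta$ the expected total cost of truthful reporting is at most the expected total cost of reporting $\hat\theta$ plus $n\varepsilon$. (An example of such a policy is exponential weights, choosing $\tau_j\in\mathcal{T}$ with probability proportional to $e^{-L_{i-1}(\tau_j,\mathcal{H}_{i-1},\hat\theta)}$, where $L_{i-1}(\tau,\mathcal{H}_{i-1},\theta)=\sum_{j\le i-1}wm(\tau,x_j)+\theta\sum_{j\le i-1}cs(\tau,x_j)$.) *)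

theory Defs
  imports "HOL-Probability.Probability"
begin

text \<open>Window lengths live in [0,\<infinity>], modelled as nonnegative extended reals.\<close>

definition cs :: "ereal \<Rightarrow> real \<Rightarrow> real" where
  "cs \<tau> x = (if ereal x > \<tau> then 1 else 0)"

definition wm :: "real \<Rightarrow> ereal \<Rightarrow> real \<Rightarrow> real" where
  "wm c_p \<tau> x = (if ereal x \<le> \<tau> then c_p * x else c_p * real_of_ereal \<tau>)"

definition hist :: "(nat \<Rightarrow> real) \<Rightarrow> nat \<Rightarrow> real list" where
  "hist x i = map x [1..<Suc i]"

text \<open>A randomized policy: on probability space M, for report th and history H,
  the random window length is tau th H (a random variable on M).\<close>

definition exp_wm :: "'a measure \<Rightarrow> (real \<Rightarrow> real list \<Rightarrow> 'a \<Rightarrow> ereal) \<Rightarrow> real \<Rightarrow> (nat \<Rightarrow> real)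
    \<Rightarrow> nat \<Rightarrow> real \<Rightarrow> real" where
  "exp_wm M tau c_p x n th =
     (\<integral>\<omega>. (\<Sum>i=1..n. wm c_p (tau th (hist x (i - 1)) \<omega>) (x i)) \<partial>M)"

definition exp_cs :: "'a measure \<Rightarrow> (real \<Rightarrow> real list \<Rightarrow> 'a \<Rightarrow> ereal) \<Rightarrow> (nat \<Rightarrow> real)
    \<Rightarrow> nat \<Rightarrow> real \<Rightarrow> real" where
  "exp_cs M tau x n th =
     (\<integral>\<omega>. (\<Sum>i=1..n. cs (tau th (hist x (i - 1)) \<omega>) (x i)) \<partial>M)"

text \<open>Expected total cost of a customer with true type theta reporting th, under
  externality payments p_i = wm(tau, x_i).\<close>
definition exp_cost :: "'a measure \<Rightarrow> (real \<Rightarrow> real list \<Rightarrow> 'a \<Rightarrow> ereal) \<Rightarrow> real \<Rightarrow> (nat \<Rightarrow> real)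
    \<Rightarrow> nat \<Rightarrow> real \<Rightarrow> real \<Rightarrow> real" where
  "exp_cost M tau c_p x n theta th =
     (\<integral>\<omega>. (\<Sum>i=1..n. wm c_p (tau th (hist x (i - 1)) \<omega>) (x i)
                      + theta * cs (tau th (hist x (i - 1)) \<omega>) (x i)) \<partial>M)"

definition tot_wm :: "real \<Rightarrow> (nat \<Rightarrow> real) \<Rightarrow> nat \<Rightarrow> ereal \<Rightarrow> real" where
  "tot_wm c_p x n \<tau> = (\<Sum>i=1..n. wm c_p \<tau> (x i))"

definition tot_cs :: "(nat \<Rightarrow> real) \<Rightarrow> nat \<Rightarrow> ereal \<Rightarrow> real" where
  "tot_cs x n \<tau> = (\<Sum>i=1..n. cs \<tau> (x i))"

definition Dgap :: "'a measure \<Rightarrow> (real \<Rightarrow> real list \<Rightarrow> 'a \<Rightarrow> ereal) \<Rightarrow> real \<Rightarrow> ereal set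
    \<Rightarrow> (nat \<Rightarrow> real) \<Rightarrow> nat \<Rightarrow> real \<Rightarrow> real" where
  "Dgap M tau c_p T x n theta =
     max 0 (SUP th\<in>{0..}. Min ((\<lambda>\<tau>. (tot_wm c_p x n \<tau> - exp_wm M tau c_p x n th)
                                  + theta * (tot_cs x n \<tau> - exp_cs M tau x n th)) ` T))"

text \<open>epsilon-IC with epsilon possibly +infinity (extended real).\<close>
definition eps_IC :: "'a measure \<Rightarrow> (real \<Rightarrow> real list \<Rightarrow> 'a \<Rightarrow> ereal) \<Rightarrow> real \<Rightarrow> (nat \<Rightarrow> real)
    \<Rightarrow> nat \<Rightarrow> ereal \<Rightarrow> bool" where
  "eps_IC M tau c_p x n \<epsilon> \<longleftrightarrow>
     (\<forall>theta\<ge>0. \<forall>th\<ge>0. ereal (exp_cost M tau c_p x n theta theta)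
        \<le> ereal (exp_cost M tau c_p x n theta th) + ereal (real n) * \<epsilon>)"

end

theory Submission
  imports Defs
begin

text \<open>Under externality payments the expected cost of a report is its point
  \<open>\<kappa>(\<hat>\<theta>) \<cdot> (1,\<theta>)\<close>. Truthful reporting is within \<open>R\<^sub>n\<close> of the best fixed
  window \<open>min\<^sub>\<tau> \<kappa>(\<tau>) \<cdot> (1,\<theta>)\<close>, and by the definition of \<open>D(\<theta>)\<close> no report
  beats that window by more than \<open>D(\<theta>)\<close>. Averaging the two additive losses
  over the \<open>n\<close> arrivals gives the \<open>\<epsilon>\<close>-IC bound.\<close>

lemma borel_measurable_wm [measurable]:
  assumes "f \<in> borel_measurable M"
  shows "(\<lambda>\<omega>. wm c (f \<omega>) y) \<in> borel_measurable M"
proof -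
  have "{\<omega> \<in> space M. ereal y \<le> f \<omega>} \<in> sets M"
    using assms by measurable
  then show ?thesis
    unfolding wm_def using assms by measurable
qed

lemma borel_measurable_cs [measurable]:
  "f \<in> borel_measurable M \<Longrightarrow> (\<lambda>\<omega>. cs (f \<omega>) y) \<in> borel_measurable M"
  unfolding cs_def by measurable

lemma abs_wm_le: "c \<ge> 0 \<Longrightarrow> t \<ge> 0 \<Longrightarrow> \<bar>wm c t y\<bar> \<le> c * \<bar>y\<bar>"
  unfolding wm_def by (cases t) (auto simp: abs_mult intro: mult_left_mono)

lemma wm_nonneg: "c \<ge> 0 \<Longrightarrow> t \<ge> 0 \<Longrightarrow> y \<ge> 0 \<Longrightarrow> wm c t y \<ge> 0"
  unfolding wm_def by (cases t) auto

lemma cs_nonneg: "cs t y \<ge> 0"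
  unfolding cs_def by simp

lemma abs_cs_le_1: "\<bar>cs t y\<bar> \<le> 1"
  unfolding cs_def by simp

lemma integrable_wm:
  assumes "finite_measure M" "c \<ge> 0" "f \<in> borel_measurable M"
    and "\<And>\<omega>. \<omega> \<in> space M \<Longrightarrow> f \<omega> \<ge> 0"
  shows "integrable M (\<lambda>\<omega>. wm c (f \<omega>) y)"
  using assms by (intro finite_measure.integrable_const_bound[where B = "c * \<bar>y\<bar>"])
    (auto intro!: AE_I2 abs_wm_le)

lemma integrable_cs:
  "finite_measure M \<Longrightarrow> f \<in> borel_measurable M \<Longrightarrow> integrable M (\<lambda>\<omega>. cs (f \<omega>) y)"
  by (intro finite_measure.integrable_const_bound[where B = 1]) (auto intro!: AE_I2 abs_cs_le_1)

lemma eps_IC_if_cost_bound: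
  assumes "n > 0"
    and "\<forall>theta\<ge>0. \<forall>th\<ge>0. exp_cost M tau c_p x n theta theta
           \<le> exp_cost M tau c_p x n theta th + R + D theta"
  shows "eps_IC M tau c_p x n ((ereal R + (SUP theta\<in>{0..}. ereal (D theta))) / ereal (real n))"
  unfolding eps_IC_def
proof (intro allI impI)
  fix theta th :: real
  assume "theta \<ge> 0" "th \<ge> 0"
  define S where "S = (SUP theta\<in>{0..}. ereal (D theta))"
  have "ereal (exp_cost M tau c_p x n theta theta)
      \<le> ereal (exp_cost M tau c_p x n theta th) + (ereal R + ereal (D theta))"
    using assms(2) \<open>theta \<ge> 0\<close> \<open>th \<ge> 0\<close> by (simp add: add.assoc)
  also have "\<dots> \<le> ereal (exp_cost M tau c_p x n theta th) + (ereal R + S)"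
    unfolding S_def using \<open>theta \<ge> 0\<close> by (intro add_left_mono SUP_upper) auto
  also have "ereal R + S = ereal (real n) * ((ereal R + S) / ereal (real n))"
    using \<open>n > 0\<close> by (simp add: ereal_divide_eq[symmetric])
  finally show "ereal (exp_cost M tau c_p x n theta theta)
      \<le> ereal (exp_cost M tau c_p x n theta th) + ereal (real n) * ((ereal R + S) / ereal (real n))" .
qed

locale random_windows = prob_space M
  for M :: "'a measure" +
  fixes tau :: "real \<Rightarrow> real list \<Rightarrow> 'a \<Rightarrow> ereal"
  assumes borel_measurable_tau: "tau th H \<in> borel_measurable M"
    and tau_nonneg: "\<omega> \<in> space M \<Longrightarrow> tau th H \<omega> \<ge> 0"
begin

lemma integrable_wm_tau: "c \<ge> 0 \<Longrightarrow> integrable M (\<lambda>\<omega>. wm c (tau th H \<omega>) y)"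
  by (intro integrable_wm finite_measure_axioms borel_measurable_tau tau_nonneg)

lemma integrable_cs_tau: "integrable M (\<lambda>\<omega>. cs (tau th H \<omega>) y)"
  by (intro integrable_cs finite_measure_axioms borel_measurable_tau)

lemma exp_cost_eq:
  assumes "c_p \<ge> 0"
  shows "exp_cost M tau c_p x n theta th = exp_wm M tau c_p x n th + theta * exp_cs M tau x n th"
proof -
  let ?w = "\<lambda>i \<omega>. wm c_p (tau th (hist x (i - 1)) \<omega>) (x i)"
  let ?c = "\<lambda>i \<omega>. cs (tau th (hist x (i - 1)) \<omega>) (x i)"
  note integrable = integrable_wm_tau[OF assms] integrable_cs_tau
  have "exp_cost M tau c_p x n theta th = (\<Sum>i=1..n. (\<integral>\<omega>. ?w i \<omega> + theta * ?c i \<omega> \<partial>M))"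
    unfolding exp_cost_def
    by (intro Bochner_Integration.integral_sum Bochner_Integration.integrable_add
        integrable_mult_right integrable)
  also have "\<dots> = (\<Sum>i=1..n. (\<integral>\<omega>. ?w i \<omega> \<partial>M)) + theta * (\<Sum>i=1..n. (\<integral>\<omega>. ?c i \<omega> \<partial>M))"
    by (simp add: integrable sum.distrib sum_distrib_left)
  also have "\<dots> = exp_wm M tau c_p x n th + theta * exp_cs M tau x n th"
    unfolding exp_wm_def exp_cs_def by (subst (1 2) Bochner_Integration.integral_sum) (auto intro: integrable)
  finally show ?thesis .
qed

lemma exp_wm_nonneg:
  "c_p \<ge> 0 \<Longrightarrow> \<forall>i\<in>{1..n}. x i \<ge> 0 \<Longrightarrow> exp_wm M tau c_p x n th \<ge> 0"
  unfolding exp_wm_def by (intro integral_nonneg_AE AE_I2 sum_nonneg wm_nonneg tau_nonneg) auto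

lemma exp_cs_nonneg: "exp_cs M tau x n th \<ge> 0"
  unfolding exp_cs_def by (intro integral_nonneg_AE AE_I2 sum_nonneg cs_nonneg)

lemma Dgap_ge:
  assumes "c_p \<ge> 0" "\<forall>i\<in>{1..n}. x i \<ge> 0" "finite T" "T \<noteq> {}" "theta \<ge> 0" "th \<ge> 0"
  shows "Min ((\<lambda>\<tau>. tot_wm c_p x n \<tau> + theta * tot_cs x n \<tau>) ` T)
           - (exp_wm M tau c_p x n th + theta * exp_cs M tau x n th)
         \<le> Dgap M tau c_p T x n theta"
proof -
  define K where "K \<tau> = tot_wm c_p x n \<tau> + theta * tot_cs x n \<tau>" for \<tau>
  define A where "A t = exp_wm M tau c_p x n t + theta * exp_cs M tau x n t" for t
  define F where "F t = Min ((\<lambda>\<tau>. (tot_wm c_p x n \<tau> - exp_wm M tau c_p x n t)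
                                + theta * (tot_cs x n \<tau> - exp_cs M tau x n t)) ` T)" for t
  have F_eq: "F t = Min (K ` T) - A t" for t
  proof -
    have "F t = Min ((\<lambda>\<tau>. K \<tau> + - A t) ` T)"
      unfolding F_def K_def A_def by (simp add: algebra_simps)
    also have "\<dots> = Min (K ` T) - A t"
      using assms(3,4) Min_add_commute[of T K "- A t"] by simp
    finally show ?thesis .
  qed
  have "A t \<ge> 0" for t
    unfolding A_def using assms(1,2,5) exp_wm_nonneg exp_cs_nonneg by simp
  then have "bdd_above (F ` {0..})"
    by (intro bdd_aboveI[where M = "Min (K ` T)"]) (auto simp: F_eq)
  then have "F th \<le> (SUP t\<in>{0..}. F t)"
    using assms(6) by (intro cSUP_upper) auto
  also have "\<dots> \<le> Dgap M tau c_p T x n theta"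
    unfolding Dgap_def F_def by simp
  finally show ?thesis
    by (simp add: F_eq K_def A_def)
qed

end

theorem lemma6p4:
  fixes M :: "'a measure" and tau :: "real \<Rightarrow> real list \<Rightarrow> 'a \<Rightarrow> ereal"
    and c_p :: real and T :: "ereal set" and n :: nat and x :: "nat \<Rightarrow> real" and R :: real
  assumes cp: "c_p > 0"
    and T: "finite T" "T \<noteq> {}" "\<forall>\<tau>\<in>T. \<tau> \<ge> 0"
    and n: "n \<ge> 1"
    and x: "\<forall>i\<in>{1..n}. x i > 0"
    and P: "prob_space M"
    and meas: "\<And>th H. tau th H \<in> borel_measurable M"
    and nonneg: "\<And>th H \<omega>. \<omega> \<in> space M \<Longrightarrow> tau th H \<omega> \<ge> 0"
    and regret: "\<forall>theta\<ge>0. exp_wm M tau c_p x n theta + theta * exp_cs M tau x n theta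
                   - Min ((\<lambda>\<tau>. tot_wm c_p x n \<tau> + theta * tot_cs x n \<tau>) ` T) \<le> R"
  shows "(\<forall>theta\<ge>0. \<forall>th\<ge>0. exp_cost M tau c_p x n theta theta
            \<le> exp_cost M tau c_p x n theta th + R + Dgap M tau c_p T x n theta)
       \<and> eps_IC M tau c_p x n
           ((ereal R + (SUP theta\<in>{0..}. ereal (Dgap M tau c_p T x n theta))) / ereal (real n))"
proof -
  interpret random_windows M tau
    using P meas nonneg by (simp add: random_windows_def random_windows_axioms_def)
  have cp0: "c_p \<ge> 0" and x0: "\<forall>i\<in>{1..n}. x i \<ge> 0"
    using cp x by auto
  have cost_bound: "\<forall>theta\<ge>0. \<forall>th\<ge>0. exp_cost M tau c_p x n theta theta
            \<le> exp_cost M tau c_p x n theta th + R + Dgap M tau c_p T x n theta"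
  proof (intro allI impI)
    fix theta th :: real
    assume "theta \<ge> 0" "th \<ge> 0"
    with regret Dgap_ge[OF cp0 x0 T(1,2)] show "exp_cost M tau c_p x n theta theta
        \<le> exp_cost M tau c_p x n theta th + R + Dgap M tau c_p T x n theta"
      by (force simp: exp_cost_eq[OF cp0])
  qed
  moreover have "n > 0"
    using n by simp
  ultimately show ?thesis
    using eps_IC_if_cost_bound by blast
qed

end
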